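(* Let $l\ge0$ be an integer and, for $\zeta,\eta>0$, let $$\mathcal{G}_0(\zeta,\eta)=\frac{\eta^{l+1}\zeta^{-l}-\zeta^{l+1}\eta^{-l}}{2l+1},\qquad H_0(\zeta)=\sqrt{\tfrac{2}{\pi}}\,e^{\zeta}\zeta^{1/2}K_{l+1/2}(\zeta),$$ where $K_{l+1/2}$ is the modified Bessel function of the second kind. Then for every $\zeta>0$, $$\int_\zeta^\infty e^{-\eta+\zeta}\mathcal{G}_0(\zeta,\eta)\frac{H_0(\eta)}{H_0(\zeta)}d\eta=1,\qquad \int_\zeta^\infty e^{-\eta+\zeta}\,\partial_\zeta\mathcal{G}_0(\zeta,\eta)\frac{H_0(\eta)}{H_0(\zeta)}d\eta=-1+\frac{H_0'(\zeta)}{H_0(\zeta)}.$$ *)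

theory Defs
  imports "HOL-Analysis.Analysis"
begin

definition besselK :: "real \<Rightarrow> real \<Rightarrow> real" where
  "besselK nu z = integral {0..} (\<lambda>t. exp (- z * cosh t) * cosh (nu * t))"

definition G0 :: "nat \<Rightarrow> real \<Rightarrow> real \<Rightarrow> real" where
  "G0 l \<zeta> \<eta> = (\<eta> ^ (l+1) * \<zeta> powr (- real l) - \<zeta> ^ (l+1) * \<eta> powr (- real l)) / (2 * real l + 1)"

definition H0 :: "nat \<Rightarrow> real \<Rightarrow> real" where
  "H0 l \<zeta> = sqrt (2 / pi) * exp \<zeta> * \<zeta> powr (1/2) * besselK (real l + 1/2) \<zeta>"

end

theory Submission
  imports Defs "HOL-Real_Asymp.Real_Asymp"
begin

text \<open>
  Put \<nu> = l + 1/2 and u(x) = sqrt x K_\<nu>(x). Then exp(\<zeta> - \<eta>) H0(\<eta>) / H0(\<zeta>) = u(\<eta>) / u(\<zeta>), and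
  differentiating the integral representation of K_\<nu> under the integral sign gives the modified
  Bessel equation in the form u'' = (1 + l(l+1)/x^2) u, with u and u' decaying like x exp(-x).
  As functions of \<eta>, both G0(\<zeta>, \<eta>) and its \<zeta>-derivative are combinations of \<eta>^(l+1) and \<eta>^(-l),
  i.e. solutions g of the Euler equation g'' = l(l+1)/x^2 g. So the Wronskian g u' - g' u has
  derivative g u and vanishes at infinity, whence the integral of g u over [\<zeta>, \<infinity>) equals
  g'(\<zeta>) u(\<zeta>) - g(\<zeta>) u'(\<zeta>). The Cauchy data (g(\<zeta>), g'(\<zeta>)) are (0, 1) for G0(\<zeta>, -) and
  (-1, 0) for its \<zeta>-derivative, which gives 1 and u'(\<zeta>)/u(\<zeta>) = -1 + H0'(\<zeta>)/H0(\<zeta>).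
\<close>

section \<open>Improper integrals over a half-line\<close>

lemma tendsto_integral_atLeastAtMost_at_top:
  fixes f :: "real \<Rightarrow> real"
  assumes "f absolutely_integrable_on {a..}"
  shows "((\<lambda>b. integral {a..b} f) \<longlongrightarrow> integral {a..} f) at_top"
proof -
  have "((\<lambda>b. LINT x:{a..b}|lebesgue. f x) \<longlongrightarrow> (LINT x:{a..}|lebesgue. f x)) at_top"
    by (rule tendsto_set_lebesgue_integral_at_top) (use assms in auto)
  moreover have "(LINT x:{a..b}|lebesgue. f x) = integral {a..b} f" for b
    by (intro set_lebesgue_integral_eq_integral(2) set_integrable_subset[OF assms]) auto
  ultimately show ?thesis
    using set_lebesgue_integral_eq_integral(2)[OF assms] by simp
qed

lemma has_integral_atLeastAtMost_antiderivative:
  fixes f F :: "real \<Rightarrow> real"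
  assumes "a \<le> b" and "\<And>x. a \<le> x \<Longrightarrow> (F has_real_derivative f x) (at x)"
  shows "(f has_integral (F b - F a)) {a..b}"
  using assms by (intro fundamental_theorem_of_calculus)
    (auto simp flip: has_real_derivative_iff_has_vector_derivative
      intro: has_field_derivative_at_within)

lemma tendsto_integral_atLeastAtMost_antiderivative:
  fixes f F :: "real \<Rightarrow> real"
  assumes "\<And>x. a \<le> x \<Longrightarrow> (F has_real_derivative f x) (at x)" and "(F \<longlongrightarrow> L) at_top"
  shows "((\<lambda>b. integral {a..b} f) \<longlongrightarrow> L - F a) at_top"
proof (rule Lim_transform_eventually)
  show "((\<lambda>b. F b - F a) \<longlongrightarrow> L - F a) at_top"
    using assms(2) by (intro tendsto_intros)
  show "eventually (\<lambda>b. F b - F a = integral {a..b} f) at_top"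
    using eventually_ge_at_top[of a]
    by eventually_elim (metis assms(1) has_integral_atLeastAtMost_antiderivative integral_unique)
qed

lemma fundamental_theorem_of_calculus_atLeast:
  fixes f F :: "real \<Rightarrow> real"
  assumes "f absolutely_integrable_on {a..}"
    and "\<And>x. a \<le> x \<Longrightarrow> (F has_real_derivative f x) (at x)" and "(F \<longlongrightarrow> L) at_top"
  shows "(f has_integral (L - F a)) {a..}"
proof -
  have "integral {a..} f = L - F a"
    using tendsto_integral_atLeastAtMost_at_top[OF assms(1)]
      tendsto_integral_atLeastAtMost_antiderivative[OF assms(2,3)]
    by (rule tendsto_unique[OF trivial_limit_at_top_linorder])
  then show ?thesis
    using assms(1) set_lebesgue_integral_eq_integral(1) integrable_integral by metis
qed

lemma fundamental_theorem_of_calculus_atLeast_nonneg: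
  fixes f F :: "real \<Rightarrow> real"
  assumes "\<And>x. a \<le> x \<Longrightarrow> (F has_real_derivative f x) (at x)"
    and "\<And>x. a \<le> x \<Longrightarrow> 0 \<le> f x" and "(F \<longlongrightarrow> L) at_top"
  shows "(f has_integral (L - F a)) {a..}"
proof (rule has_integral_to_inf)
  show "f integrable_on {a..b}" for b
  proof (cases "a \<le> b")
    case True
    then show ?thesis
      using has_integral_atLeastAtMost_antiderivative[OF True assms(1)] by blast
  qed auto
qed (use assms tendsto_integral_atLeastAtMost_antiderivative in auto)

lemma absolutely_integrable_on_atLeast_if_exp_dominated:
  fixes f :: "real \<Rightarrow> real"
  assumes f: "continuous_on {a..} f" and dominated: "eventually (\<lambda>t. \<bar>f t\<bar> \<le> exp (- t)) at_top"
  shows "f absolutely_integrable_on {a..}"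
proof -
  obtain T where T: "a \<le> T" "\<And>t. T \<le> t \<Longrightarrow> \<bar>f t\<bar> \<le> exp (- t)"
    using dominated unfolding eventually_at_top_linorder
    by (meson order.trans max.cobounded1 max.cobounded2)
  have "f absolutely_integrable_on {a..T}"
    by (intro absolutely_integrable_continuous_real continuous_on_subset[OF f]) auto
  moreover have "f absolutely_integrable_on {T..}"
  proof (rule measurable_bounded_by_integrable_imp_absolutely_integrable)
    show "f \<in> borel_measurable (lebesgue_on {T..})"
      using T(1)
      by (intro continuous_imp_measurable_on_sets_lebesgue continuous_on_subset[OF f]) auto
    show "(\<lambda>t. exp (- t)) integrable_on {T..}"
      using integrable_on_exp_minus_to_infinity[of 1 T] by simp
  qed (use T(2) in auto)
  moreover have "{a..} = {a..T} \<union> {T..}"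
    using T(1) by auto
  ultimately show ?thesis
    by (metis absolutely_integrable_Un)
qed

section \<open>Euler equations and the Wronskian\<close>

definition euler_solution :: "real \<Rightarrow> real \<Rightarrow> real \<Rightarrow> real \<Rightarrow> real" where
  "euler_solution p \<alpha> \<beta> x = \<alpha> * x powr (p + 1) + \<beta> * x powr (- p)"

definition euler_solution' :: "real \<Rightarrow> real \<Rightarrow> real \<Rightarrow> real \<Rightarrow> real" where
  "euler_solution' p \<alpha> \<beta> x = \<alpha> * (p + 1) * x powr p - \<beta> * p * x powr (- p - 1)"

lemma has_real_derivative_euler_solution:
  "0 < x \<Longrightarrow> (euler_solution p \<alpha> \<beta> has_real_derivative euler_solution' p \<alpha> \<beta> x) (at x)"
  unfolding euler_solution_def [abs_def] euler_solution'_def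
  by (auto intro!: derivative_eq_intros simp: algebra_simps)

lemma has_real_derivative_euler_solution':
  assumes "0 < x"
  shows "(euler_solution' p \<alpha> \<beta> has_real_derivative p * (p + 1) / x\<^sup>2 * euler_solution p \<alpha> \<beta> x)
    (at x)"
proof -
  have "x powr (- p - 1 - 1) = x powr (- p - 2)"
    by (simp only: diff_diff_eq one_add_one)
  then have e: "x powr (p - 1) = x powr (p + 1) / x\<^sup>2" "x powr (- p - 1 - 1) = x powr (- p) / x\<^sup>2"
    using assms powr_diff[of x "p + 1" 2] powr_diff[of x "- p" 2] by (simp_all add: powr_realpow)
  show ?thesis
    unfolding euler_solution'_def [abs_def]
    by (rule DERIV_cong[OF DERIV_diff[OF DERIV_cmult DERIV_cmult,
          OF has_real_derivative_powr has_real_derivative_powr, OF assms assms]])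
      (use assms in \<open>unfold e, simp add: euler_solution_def field_simps\<close>)
qed

lemma euler_solution_bounds:
  assumes "1 \<le> x"
  shows "\<bar>euler_solution p \<alpha> \<beta> x\<bar> \<le> (\<bar>\<alpha>\<bar> + \<bar>\<beta>\<bar>) * (\<bar>p\<bar> + 1) * x powr (\<bar>p\<bar> + 1)"
    and "\<bar>euler_solution' p \<alpha> \<beta> x\<bar> \<le> (\<bar>\<alpha>\<bar> + \<bar>\<beta>\<bar>) * (\<bar>p\<bar> + 1) * x powr (\<bar>p\<bar> + 1)"
proof -
  define X where "X = x powr (\<bar>p\<bar> + 1)"
  have le: "x powr r \<le> X" if "r \<le> \<bar>p\<bar> + 1" for r
    unfolding X_def using that assms by (rule powr_mono)
  have X: "1 \<le> X"
    using le[of 0] assms by simp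
  have "\<bar>euler_solution p \<alpha> \<beta> x\<bar> \<le> \<bar>\<alpha>\<bar> * X + \<bar>\<beta>\<bar> * X"
    unfolding euler_solution_def
    using le[of "p + 1"] le[of "- p"]
    by (intro order_trans[OF abs_triangle_ineq] add_mono)
      (auto simp: abs_mult intro: mult_left_mono)
  also have "\<dots> \<le> (\<bar>\<alpha>\<bar> + \<bar>\<beta>\<bar>) * (\<bar>p\<bar> + 1) * X"
    using X by (simp add: algebra_simps mult_left_mono)
  finally show "\<bar>euler_solution p \<alpha> \<beta> x\<bar> \<le> (\<bar>\<alpha>\<bar> + \<bar>\<beta>\<bar>) * (\<bar>p\<bar> + 1) * x powr (\<bar>p\<bar> + 1)"
    by (simp add: X_def)
  have "\<bar>euler_solution' p \<alpha> \<beta> x\<bar> \<le> \<bar>\<alpha>\<bar> * (\<bar>p\<bar> + 1) * X + \<bar>\<beta>\<bar> * (\<bar>p\<bar> + 1) * X"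
    unfolding euler_solution'_def
    using le[of p] le[of "- p - 1"]
    by (intro order_trans[OF abs_triangle_ineq4] add_mono) (auto simp: abs_mult intro!: mult_mono)
  then show "\<bar>euler_solution' p \<alpha> \<beta> x\<bar> \<le> (\<bar>\<alpha>\<bar> + \<bar>\<beta>\<bar>) * (\<bar>p\<bar> + 1) * x powr (\<bar>p\<bar> + 1)"
    by (simp add: X_def algebra_simps)
qed

lemma wronskian_has_integral:
  fixes g g' u u' q :: "real \<Rightarrow> real"
  assumes g: "\<And>x. a \<le> x \<Longrightarrow> (g has_real_derivative g' x) (at x)"
    and g': "\<And>x. a \<le> x \<Longrightarrow> (g' has_real_derivative q x * g x) (at x)"
    and u: "\<And>x. a \<le> x \<Longrightarrow> (u has_real_derivative u' x) (at x)"
    and u': "\<And>x. a \<le> x \<Longrightarrow> (u' has_real_derivative (1 + q x) * u x) (at x)"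
    and nonneg: "\<And>x. a \<le> x \<Longrightarrow> 0 \<le> g x * u x"
    and lim: "((\<lambda>x. g x * u' x - g' x * u x) \<longlongrightarrow> 0) at_top"
  shows "((\<lambda>x. g x * u x) has_integral (g' a * u a - g a * u' a)) {a..}"
proof -
  have "((\<lambda>x. g x * u' x - g' x * u x) has_real_derivative g x * u x) (at x)" if "a \<le> x" for x
    by (rule DERIV_cong[OF DERIV_diff[OF DERIV_mult DERIV_mult, OF g u' g' u]])
      (use that in \<open>auto simp: algebra_simps\<close>)
  from fundamental_theorem_of_calculus_atLeast_nonneg[OF this nonneg lim] show ?thesis
    by simp
qed

lemma wronskian_tendsto_zero:
  fixes g g' u u' :: "real \<Rightarrow> real"
  assumes "\<And>x. 1 \<le> x \<Longrightarrow> \<bar>g x\<bar> \<le> A * x powr r" and "\<And>x. 1 \<le> x \<Longrightarrow> \<bar>g' x\<bar> \<le> A * x powr r"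
    and "\<And>x. 1 \<le> x \<Longrightarrow> \<bar>u x\<bar> \<le> B * x * exp (- x)" and "\<And>x. 1 \<le> x \<Longrightarrow> \<bar>u' x\<bar> \<le> B * x * exp (- x)"
  shows "((\<lambda>x. g x * u' x - g' x * u x) \<longlongrightarrow> 0) at_top"
proof (rule Lim_null_comparison)
  show "eventually (\<lambda>x. norm (g x * u' x - g' x * u x)
      \<le> 2 * (A * B) * (x powr r * (x * exp (- x)))) at_top"
    using eventually_ge_at_top[of 1]
  proof eventually_elim
    case (elim x)
    have "\<bar>g x * u' x - g' x * u x\<bar> \<le> \<bar>g x\<bar> * \<bar>u' x\<bar> + \<bar>g' x\<bar> * \<bar>u x\<bar>"
      by (simp add: abs_mult[symmetric] abs_triangle_ineq4)
    also have "\<dots> \<le> A * x powr r * (B * x * exp (- x)) + A * x powr r * (B * x * exp (- x))"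
      using assms[OF elim] by (intro add_mono mult_mono) (auto intro: order_trans[OF abs_ge_zero])
    finally show ?case
      by (simp add: algebra_simps)
  qed
  have "((\<lambda>x. x powr r * (x * exp (- x))) \<longlongrightarrow> 0) at_top"
    by real_asymp
  then show "((\<lambda>x. 2 * (A * B) * (x powr r * (x * exp (- x)))) \<longlongrightarrow> 0) at_top"
    by (rule tendsto_mult_right_zero)
qed

section \<open>The integral representation of the Macdonald function\<close>

definition besselK_integrand :: "real \<Rightarrow> nat \<Rightarrow> real \<Rightarrow> real \<Rightarrow> real" where
  "besselK_integrand \<nu> m z t = cosh t ^ m * exp (- z * cosh t) * cosh (\<nu> * t)"

lemma besselK_integrand_nonneg: "0 \<le> besselK_integrand \<nu> m z t"
  by (simp add: besselK_integrand_def)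

lemma continuous_on_besselK_integrand: "continuous_on S (besselK_integrand \<nu> m z)"
  unfolding besselK_integrand_def by (intro continuous_intros)

lemma besselK_integrand_absolutely_integrable:
  assumes "0 < z"
  shows "besselK_integrand \<nu> m z absolutely_integrable_on {0..}"
proof (rule absolutely_integrable_on_atLeast_if_exp_dominated[OF continuous_on_besselK_integrand])
  have "((\<lambda>t. besselK_integrand \<nu> m z t * exp t) \<longlongrightarrow> 0) at_top"
    unfolding besselK_integrand_def using assms by real_asymp
  then have "eventually (\<lambda>t. besselK_integrand \<nu> m z t * exp t < 1) at_top"
    by (rule order_tendstoD) simp
  then show "eventually (\<lambda>t. \<bar>besselK_integrand \<nu> m z t\<bar> \<le> exp (- t)) at_top"
    by eventually_elim (simp add: besselK_integrand_nonneg exp_minus field_simps)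
qed

lemma besselK_integrand_integrable: "0 < z \<Longrightarrow> besselK_integrand \<nu> m z integrable_on {0..}"
  using besselK_integrand_absolutely_integrable set_lebesgue_integral_eq_integral(1) by blast

text \<open>\<open>besselK_moment \<nu> m z\<close> is (-1)^m times the m-th derivative of \<open>besselK \<nu>\<close> at z.\<close>

definition besselK_moment :: "real \<Rightarrow> nat \<Rightarrow> real \<Rightarrow> real" where
  "besselK_moment \<nu> m z = integral {0..} (besselK_integrand \<nu> m z)"

lemma besselK_eq_besselK_moment: "besselK \<nu> = besselK_moment \<nu> 0"
  by (simp add: fun_eq_iff besselK_def besselK_moment_def besselK_integrand_def[abs_def])

lemma besselK_moment_pos:
  assumes "0 < z"
  shows "0 < besselK_moment \<nu> m z"
proof -
  have "exp (- z * cosh 1) \<le> besselK_integrand \<nu> m z t" if "t \<in> {0..1}" for t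
  proof -
    have "exp (- z * cosh 1) \<le> exp (- z * cosh t)"
      using that assms by (simp add: cosh_real_nonneg_le_iff)
    also have "\<dots> = 1 * exp (- z * cosh t) * 1"
      by simp
    also have "\<dots> \<le> cosh t ^ m * exp (- z * cosh t) * cosh (\<nu> * t)"
      using cosh_real_ge_1[of t] cosh_real_ge_1[of "\<nu> * t"]
      by (intro mult_mono one_le_power) auto
    finally show ?thesis
      by (simp add: besselK_integrand_def)
  qed
  then have "integral {0..1} (\<lambda>t::real. exp (- z * cosh 1))
      \<le> integral {0..1} (besselK_integrand \<nu> m z)"
    by (intro Henstock_Kurzweil_Integration.integral_le)
      (auto intro: integrable_continuous_interval continuous_on_besselK_integrand)
  also have "\<dots> \<le> besselK_moment \<nu> m z"
    unfolding besselK_moment_def using assms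
    by (intro integral_subset_le integrable_continuous_interval continuous_on_besselK_integrand
        besselK_integrand_integrable) (auto simp: besselK_integrand_nonneg)
  finally show ?thesis
    by (simp add: less_le_trans[OF exp_gt_zero])
qed

lemma besselK_moment_le_exp:
  assumes "1 \<le> z"
  shows "besselK_moment \<nu> m z \<le> exp (1 - z) * besselK_moment \<nu> m 1"
proof -
  have "besselK_integrand \<nu> m z t \<le> exp (1 - z) * besselK_integrand \<nu> m 1 t" for t
  proof -
    have "besselK_integrand \<nu> m z t = exp ((1 - z) * cosh t) * besselK_integrand \<nu> m 1 t"
      by (simp add: besselK_integrand_def algebra_simps flip: exp_add)
    moreover have "exp ((1 - z) * cosh t) \<le> exp (1 - z)"
      using assms cosh_real_ge_1[of t] by (simp add: mult_le_cancel_left2)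
    ultimately show ?thesis
      by (simp add: besselK_integrand_nonneg mult_right_mono)
  qed
  then show ?thesis
    unfolding besselK_moment_def using assms
    by (simp flip: integral_mult_right
        add: Henstock_Kurzweil_Integration.integral_le besselK_integrand_integrable)
qed

lemma abs_exp_minus_one_minus_le: "\<bar>exp x - 1 - x\<bar> \<le> x\<^sup>2 * exp \<bar>x\<bar>" for x :: real
proof -
  obtain s where s: "\<bar>s\<bar> \<le> \<bar>x\<bar>" "exp x = (\<Sum>m<2. x ^ m / fact m) + exp s / fact 2 * x ^ 2"
    using Maclaurin_exp_le[of x 2] by blast
  then have "\<bar>exp x - 1 - x\<bar> = exp s / 2 * x\<^sup>2"
    by (simp add: numeral_2_eq_2)
  also have "\<dots> \<le> exp \<bar>x\<bar> * x\<^sup>2"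
  proof (rule mult_right_mono)
    have "exp s \<le> exp \<bar>x\<bar>"
      using s(1) by simp
    then show "exp s / 2 \<le> exp \<bar>x\<bar>"
      using exp_gt_zero[of s] by linarith
  qed simp
  finally show ?thesis
    by (simp add: mult.commute)
qed

lemma besselK_integrand_taylor:
  assumes "\<bar>h\<bar> \<le> z / 2"
  shows "\<bar>besselK_integrand \<nu> m (z + h) t - besselK_integrand \<nu> m z t
      + h * besselK_integrand \<nu> (Suc m) z t\<bar>
    \<le> h\<^sup>2 * besselK_integrand \<nu> (Suc (Suc m)) (z / 2) t"
proof -
  define c where "c = cosh t"
  define A where "A = c ^ m * exp (- z * c) * cosh (\<nu> * t)"
  have c: "1 \<le> c" and A: "0 \<le> A"
    by (simp_all add: c_def A_def cosh_real_ge_1)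
  have "besselK_integrand \<nu> m (z + h) t - besselK_integrand \<nu> m z t
      + h * besselK_integrand \<nu> (Suc m) z t = A * (exp (- h * c) - 1 - (- h * c))"
    by (simp add: besselK_integrand_def c_def [symmetric] A_def algebra_simps flip: exp_add)
  then have "\<bar>besselK_integrand \<nu> m (z + h) t - besselK_integrand \<nu> m z t
      + h * besselK_integrand \<nu> (Suc m) z t\<bar> = A * \<bar>exp (- h * c) - 1 - (- h * c)\<bar>"
    using A by (simp add: abs_mult)
  also have "\<dots> \<le> A * ((h * c)\<^sup>2 * exp (\<bar>h\<bar> * c))"
    using abs_exp_minus_one_minus_le[of "- h * c"] A c by (simp add: abs_mult mult_left_mono)
  also have "\<dots> \<le> A * ((h * c)\<^sup>2 * exp (z / 2 * c))"
    using assms A c by (intro mult_left_mono) (auto intro: mult_right_mono)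
  also have "\<dots> = h\<^sup>2 * besselK_integrand \<nu> (Suc (Suc m)) (z / 2) t"
    by (simp add: besselK_integrand_def c_def [symmetric] A_def power2_eq_square algebra_simps
        flip: exp_add)
  finally show ?thesis .
qed

lemma besselK_moment_taylor:
  assumes "0 < z" and "\<bar>h\<bar> \<le> z / 2"
  shows "\<bar>besselK_moment \<nu> m (z + h) - besselK_moment \<nu> m z + h * besselK_moment \<nu> (Suc m) z\<bar>
    \<le> h\<^sup>2 * besselK_moment \<nu> (Suc (Suc m)) (z / 2)"
proof -
  have pos: "0 < z + h" "0 < z / 2"
    using assms by auto
  let ?r = "\<lambda>t. besselK_integrand \<nu> m (z + h) t - besselK_integrand \<nu> m z t
    + h * besselK_integrand \<nu> (Suc m) z t"
  have r: "(?r has_integral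
      besselK_moment \<nu> m (z + h) - besselK_moment \<nu> m z + h * besselK_moment \<nu> (Suc m) z) {0..}"
    unfolding besselK_moment_def using assms(1) pos
    by (intro has_integral_add has_integral_diff has_integral_mult_right integrable_integral
        besselK_integrand_integrable)
  moreover have b: "((\<lambda>t. h\<^sup>2 * besselK_integrand \<nu> (Suc (Suc m)) (z / 2) t) has_integral
      h\<^sup>2 * besselK_moment \<nu> (Suc (Suc m)) (z / 2)) {0..}"
    unfolding besselK_moment_def using pos
    by (intro has_integral_mult_right integrable_integral besselK_integrand_integrable)
  ultimately have "norm (integral {0..} ?r)
      \<le> integral {0..} (\<lambda>t. h\<^sup>2 * besselK_integrand \<nu> (Suc (Suc m)) (z / 2) t)"
    using besselK_integrand_taylor[OF assms(2)]
    by (intro Henstock_Kurzweil_Integration.integral_norm_bound_integral)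
      (auto simp: integrable_on_def)
  then show ?thesis
    by (simp only: real_norm_def integral_unique[OF r] integral_unique[OF b])
qed

lemma has_real_derivative_besselK_moment:
  assumes "0 < z"
  shows "(besselK_moment \<nu> m has_real_derivative - besselK_moment \<nu> (Suc m) z) (at z)"
proof -
  define M where "M = besselK_moment \<nu> (Suc (Suc m)) (z / 2)"
  have "eventually (\<lambda>y. norm ((besselK_moment \<nu> m y - besselK_moment \<nu> m z) / (y - z)
      - - besselK_moment \<nu> (Suc m) z) \<le> M * \<bar>y - z\<bar>) (at z)"
    unfolding eventually_at
  proof (intro exI[of _ "z / 2"] conjI ballI impI)
    fix y assume y: "y \<noteq> z \<and> dist y z < z / 2"
    define h where "h = y - z"
    have h: "h \<noteq> 0" "\<bar>h\<bar> \<le> z / 2" "y = z + h"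
      using y by (auto simp: h_def dist_real_def)
    have "norm ((besselK_moment \<nu> m y - besselK_moment \<nu> m z) / (y - z)
          - - besselK_moment \<nu> (Suc m) z)
        = \<bar>besselK_moment \<nu> m (z + h) - besselK_moment \<nu> m z
          + h * besselK_moment \<nu> (Suc m) z\<bar> / \<bar>h\<bar>"
      using h by (simp add: field_simps flip: abs_divide)
    also have "\<dots> \<le> h\<^sup>2 * M / \<bar>h\<bar>"
      unfolding M_def using besselK_moment_taylor[OF assms h(2)] by (intro divide_right_mono) auto
    also have "\<dots> = M * \<bar>y - z\<bar>"
      using h by (simp add: power2_eq_square field_simps abs_mult_self_eq)
    finally show "norm ((besselK_moment \<nu> m y - besselK_moment \<nu> m z) / (y - z)
        - - besselK_moment \<nu> (Suc m) z) \<le> M * \<bar>y - z\<bar>" .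
  qed (use assms in simp)
  moreover have "((\<lambda>y. M * \<bar>y - z\<bar>) \<longlongrightarrow> 0) (at z)"
    using tendsto_mult_right_zero[OF tendsto_rabs_zero[OF LIM_zero[OF tendsto_ident_at]], of M]
    by simp
  ultimately have "((\<lambda>y. (besselK_moment \<nu> m y - besselK_moment \<nu> m z) / (y - z))
      \<longlongrightarrow> - besselK_moment \<nu> (Suc m) z) (at z)"
    by (rule LIM_zero_cancel[OF Lim_null_comparison])
  then show ?thesis
    by (simp add: has_field_derivative_iff)
qed

lemma besselK_moment_ode:
  assumes "0 < z"
  shows "z\<^sup>2 * besselK_moment \<nu> 2 z - z * besselK_moment \<nu> 1 z
    - (z\<^sup>2 + \<nu>\<^sup>2) * besselK_moment \<nu> 0 z = 0"
proof -
  define g where "g t = z\<^sup>2 * besselK_integrand \<nu> 2 z t - z * besselK_integrand \<nu> 1 z t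
    - (z\<^sup>2 + \<nu>\<^sup>2) * besselK_integrand \<nu> 0 z t" for t
  \<comment> \<open>\<open>P\<close> is a \<open>t\<close>-antiderivative of the Bessel operator applied to the integrand.\<close>
  define P where "P t = - z * sinh t * exp (- z * cosh t) * cosh (\<nu> * t)
    - \<nu> * exp (- z * cosh t) * sinh (\<nu> * t)" for t
  have "(g has_integral z\<^sup>2 * besselK_moment \<nu> 2 z - z * besselK_moment \<nu> 1 z
      - (z\<^sup>2 + \<nu>\<^sup>2) * besselK_moment \<nu> 0 z) {0..}"
    unfolding g_def besselK_moment_def using assms
    by (intro has_integral_diff has_integral_mult_right integrable_integral
        besselK_integrand_integrable)
  moreover have "(g has_integral 0 - P 0) {0..}"
  proof (rule fundamental_theorem_of_calculus_atLeast)
    show "g absolutely_integrable_on {0..}"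
      unfolding g_def using besselK_integrand_absolutely_integrable[OF assms]
      by (intro set_integral_diff(1) set_integrable_mult_right)
    show "(P has_real_derivative g t) (at t)" for t
    proof -
      have "cosh t ^ 2 = 1 + sinh t ^ 2"
        using cosh_square_eq[of t] by simp
      then show ?thesis
        unfolding P_def g_def besselK_integrand_def
        by (auto intro!: derivative_eq_intros simp: algebra_simps power2_eq_square)
    qed
    show "(P \<longlongrightarrow> 0) at_top"
      unfolding P_def using assms by real_asymp
  qed
  ultimately show ?thesis
    by (simp add: P_def) (metis has_integral_unique eq_iff_diff_eq_0)
qed

section \<open>The reduced function sqrt x K_nu(x)\<close>

definition sqrt_besselK :: "real \<Rightarrow> real \<Rightarrow> real" where
  "sqrt_besselK \<nu> x = sqrt x * besselK \<nu> x"

definition sqrt_besselK' :: "real \<Rightarrow> real \<Rightarrow> real" where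
  "sqrt_besselK' \<nu> x = besselK \<nu> x / (2 * sqrt x) - sqrt x * besselK_moment \<nu> 1 x"

lemma sqrt_besselK_pos: "0 < x \<Longrightarrow> 0 < sqrt_besselK \<nu> x"
  by (simp add: sqrt_besselK_def besselK_eq_besselK_moment besselK_moment_pos)

lemma has_real_derivative_sqrt_besselK:
  assumes "0 < x"
  shows "(sqrt_besselK \<nu> has_real_derivative sqrt_besselK' \<nu> x) (at x)"
proof -
  have "((\<lambda>x. sqrt x * besselK_moment \<nu> 0 x) has_real_derivative
      inverse (sqrt x) / 2 * besselK_moment \<nu> 0 x + - besselK_moment \<nu> 1 x * sqrt x) (at x)"
    using DERIV_mult[OF DERIV_real_sqrt has_real_derivative_besselK_moment] assms by simp
  then show ?thesis
    unfolding sqrt_besselK_def [abs_def] besselK_eq_besselK_moment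
    by (rule DERIV_cong) (simp add: sqrt_besselK'_def besselK_eq_besselK_moment field_simps)
qed

lemma has_real_derivative_sqrt_besselK':
  assumes "0 < x"
  shows "(sqrt_besselK' \<nu> has_real_derivative (1 + (\<nu>\<^sup>2 - 1/4) / x\<^sup>2) * sqrt_besselK \<nu> x) (at x)"
proof -
  define K where "K m = besselK_moment \<nu> m x" for m
  have d: "(sqrt_besselK' \<nu> has_real_derivative
      (- K 1 * (2 * sqrt x) - K 0 * (2 * (inverse (sqrt x) / 2))) / (2 * sqrt x * (2 * sqrt x))
      - (inverse (sqrt x) / 2 * K 1 + - K 2 * sqrt x)) (at x)"
    unfolding sqrt_besselK'_def [abs_def] besselK_eq_besselK_moment K_def using assms
    by (intro DERIV_diff DERIV_divide DERIV_mult DERIV_cmult DERIV_real_sqrt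
        has_real_derivative_besselK_moment)
      (auto simp: numeral_2_eq_2 intro: has_real_derivative_besselK_moment)
  obtain s where s: "0 < s" "x = s\<^sup>2"
    using assms by (metis real_sqrt_gt_0_iff real_sqrt_pow2 less_imp_le)
  have "s ^ 4 * K 2 = s\<^sup>2 * K 1 + (s ^ 4 + \<nu>\<^sup>2) * K 0"
    using besselK_moment_ode[OF assms, of \<nu>] unfolding K_def s(2)
    by (simp add: eval_nat_numeral algebra_simps)
  then have K2: "K 2 = (s\<^sup>2 * K 1 + (s ^ 4 + \<nu>\<^sup>2) * K 0) / s ^ 4"
    using s(1) by (simp add: field_simps)
  show ?thesis
    unfolding sqrt_besselK_def besselK_eq_besselK_moment K_def [symmetric]
    by (rule DERIV_cong[OF d[unfolded K2]]) (use s in \<open>simp add: field_simps eval_nat_numeral\<close>)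
qed

lemma sqrt_besselK_exp_bounds:
  obtains c where "\<And>x. 1 \<le> x \<Longrightarrow> \<bar>sqrt_besselK \<nu> x\<bar> \<le> c * x * exp (- x)"
    and "\<And>x. 1 \<le> x \<Longrightarrow> \<bar>sqrt_besselK' \<nu> x\<bar> \<le> c * x * exp (- x)"
proof -
  define S where "S = besselK_moment \<nu> 0 1 + besselK_moment \<nu> 1 1"
  show ?thesis
  proof (rule that[of "exp 1 * S"])
    fix x :: real assume x: "1 \<le> x"
    define E where "E = exp 1 * exp (- x)"
    have K: "besselK_moment \<nu> m x \<le> E * besselK_moment \<nu> m 1" for m
      using besselK_moment_le_exp[OF x, of \<nu> m] by (simp add: E_def flip: exp_add)
    have pos: "0 < besselK_moment \<nu> m x" "0 < besselK_moment \<nu> m 1" "0 < E" for m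
      using x by (simp_all add: besselK_moment_pos E_def)
    have sqrt: "1 \<le> sqrt x" "sqrt x \<le> x"
      using x real_sqrt_le_mono[of x "x\<^sup>2"] by (auto simp: power2_eq_square)
    have bound: "exp 1 * S * x * exp (- x)
        = x * (E * besselK_moment \<nu> 0 1) + x * (E * besselK_moment \<nu> 1 1)"
      by (simp add: S_def E_def algebra_simps)
    have "\<bar>sqrt_besselK \<nu> x\<bar> \<le> x * besselK_moment \<nu> 0 x"
      using pos(1)[of 0] sqrt
      by (simp add: sqrt_besselK_def besselK_eq_besselK_moment abs_mult abs_of_pos mult_right_mono)
    also have "\<dots> \<le> exp 1 * S * x * exp (- x)"
      unfolding bound using K[of 0] pos x
      by (intro add_increasing2 mult_left_mono) (auto intro: mult_nonneg_nonneg less_imp_le)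
    finally show "\<bar>sqrt_besselK \<nu> x\<bar> \<le> exp 1 * S * x * exp (- x)" .
    have "\<bar>sqrt_besselK' \<nu> x\<bar> \<le> besselK_moment \<nu> 0 x / (2 * sqrt x) + sqrt x * besselK_moment \<nu> 1 x"
      using pos(1)[of 0] pos(1)[of 1] x
      by (simp add: sqrt_besselK'_def besselK_eq_besselK_moment abs_le_iff zero_le_mult_iff)
    also have "\<dots> \<le> x * besselK_moment \<nu> 0 x + x * besselK_moment \<nu> 1 x"
    proof (rule add_mono)
      have "1 * 1 \<le> x * (2 * sqrt x)"
        by (intro mult_mono) (use sqrt x in linarith)+
      then show "besselK_moment \<nu> 0 x / (2 * sqrt x) \<le> x * besselK_moment \<nu> 0 x"
        using pos(1)[of 0] sqrt by (simp add: divide_le_eq mult_le_cancel_right1 algebra_simps)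
      show "sqrt x * besselK_moment \<nu> 1 x \<le> x * besselK_moment \<nu> 1 x"
        using pos(1)[of 1] sqrt by (simp add: mult_right_mono)
    qed
    also have "\<dots> \<le> exp 1 * S * x * exp (- x)"
      unfolding bound using K x by (intro add_mono mult_left_mono) auto
    finally show "\<bar>sqrt_besselK' \<nu> x\<bar> \<le> exp 1 * S * x * exp (- x)" .
  qed
qed

lemma euler_solution_sqrt_besselK_has_integral:
  assumes "0 < a" and nonneg: "\<And>x. a \<le> x \<Longrightarrow> 0 \<le> euler_solution p \<alpha> \<beta> x"
  shows "((\<lambda>x. euler_solution p \<alpha> \<beta> x * sqrt_besselK (p + 1/2) x) has_integral
    euler_solution' p \<alpha> \<beta> a * sqrt_besselK (p + 1/2) a
      - euler_solution p \<alpha> \<beta> a * sqrt_besselK' (p + 1/2) a) {a..}"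
proof (rule wronskian_has_integral[where q = "\<lambda>x. p * (p + 1) / x\<^sup>2"])
  fix x assume x: "a \<le> x"
  then have "0 < x"
    using assms(1) by linarith
  moreover have "(p + 1/2)\<^sup>2 - 1/4 = p * (p + 1)"
    by (simp add: power2_eq_square algebra_simps)
  ultimately show "(euler_solution p \<alpha> \<beta> has_real_derivative euler_solution' p \<alpha> \<beta> x) (at x)"
    and "(euler_solution' p \<alpha> \<beta> has_real_derivative
      p * (p + 1) / x\<^sup>2 * euler_solution p \<alpha> \<beta> x) (at x)"
    and "(sqrt_besselK (p + 1/2) has_real_derivative sqrt_besselK' (p + 1/2) x) (at x)"
    and "(sqrt_besselK' (p + 1/2) has_real_derivative
      (1 + p * (p + 1) / x\<^sup>2) * sqrt_besselK (p + 1/2) x) (at x)"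
    and "0 \<le> euler_solution p \<alpha> \<beta> x * sqrt_besselK (p + 1/2) x"
    using has_real_derivative_euler_solution has_real_derivative_euler_solution'
      has_real_derivative_sqrt_besselK has_real_derivative_sqrt_besselK'[of x "p + 1/2"]
      nonneg[OF x] sqrt_besselK_pos[of x "p + 1/2"] by auto
next
  obtain c where "\<And>x. 1 \<le> x \<Longrightarrow> \<bar>sqrt_besselK (p + 1/2) x\<bar> \<le> c * x * exp (- x)"
    and "\<And>x. 1 \<le> x \<Longrightarrow> \<bar>sqrt_besselK' (p + 1/2) x\<bar> \<le> c * x * exp (- x)"
    using sqrt_besselK_exp_bounds[where \<nu> = "p + 1/2"] by blast
  with euler_solution_bounds show "((\<lambda>x. euler_solution p \<alpha> \<beta> x * sqrt_besselK' (p + 1/2) x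
      - euler_solution' p \<alpha> \<beta> x * sqrt_besselK (p + 1/2) x) \<longlongrightarrow> 0) at_top"
    by (intro wronskian_tendsto_zero)
qed

lemma euler_solution_sqrt_besselK_ratio_has_integral:
  assumes "0 < a" and "\<And>x. a \<le> x \<Longrightarrow> 0 \<le> euler_solution p \<alpha> \<beta> x"
  shows "((\<lambda>x. euler_solution p \<alpha> \<beta> x * (sqrt_besselK (p + 1/2) x / sqrt_besselK (p + 1/2) a))
    has_integral euler_solution' p \<alpha> \<beta> a
      - euler_solution p \<alpha> \<beta> a * sqrt_besselK' (p + 1/2) a / sqrt_besselK (p + 1/2) a) {a..}"
  using has_integral_divide[OF euler_solution_sqrt_besselK_has_integral[OF assms],
      of "sqrt_besselK (p + 1/2) a"]
    sqrt_besselK_pos[OF assms(1), of "p + 1/2"]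
  by (simp add: field_simps)

section \<open>The kernels G0 and H0\<close>

lemma H0_eq_sqrt_besselK: "0 < x \<Longrightarrow> H0 l x = sqrt (2 / pi) * exp x * sqrt_besselK (real l + 1/2) x"
  by (simp add: H0_def sqrt_besselK_def powr_half_sqrt)

lemma H0_ratio:
  assumes "0 < \<zeta>" and "\<zeta> \<le> \<eta>"
  shows "exp (- \<eta> + \<zeta>) * (H0 l \<eta> / H0 l \<zeta>)
    = sqrt_besselK (real l + 1/2) \<eta> / sqrt_besselK (real l + 1/2) \<zeta>"
  using assms sqrt_besselK_pos[OF assms(1), of "real l + 1/2"]
  by (simp add: H0_eq_sqrt_besselK field_simps flip: exp_add)

lemma deriv_H0_over_H0:
  assumes "0 < \<zeta>"
  shows "deriv (H0 l) \<zeta> / H0 l \<zeta>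
    = 1 + sqrt_besselK' (real l + 1/2) \<zeta> / sqrt_besselK (real l + 1/2) \<zeta>"
proof -
  let ?u = "sqrt_besselK (real l + 1/2)" and ?u' = "sqrt_besselK' (real l + 1/2)"
  have "((\<lambda>x. sqrt (2 / pi) * exp x * ?u x) has_real_derivative
      sqrt (2 / pi) * exp \<zeta> * (?u \<zeta> + ?u' \<zeta>)) (at \<zeta>)"
    using assms
    by (auto intro!: derivative_eq_intros has_real_derivative_sqrt_besselK simp: algebra_simps)
  then have "(H0 l has_real_derivative sqrt (2 / pi) * exp \<zeta> * (?u \<zeta> + ?u' \<zeta>)) (at \<zeta>)"
    by (rule has_field_derivative_transform_within_open[where S = "{0<..}"])
      (use assms in \<open>auto simp: H0_eq_sqrt_besselK\<close>)
  then show ?thesis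
    using assms sqrt_besselK_pos[OF assms, of "real l + 1/2"]
    by (simp add: DERIV_imp_deriv H0_eq_sqrt_besselK field_simps)
qed

lemma powr_real_of_nat_eqs:
  fixes x :: real
  assumes "0 < x"
  shows "x powr real n = x ^ n" and "x powr (real n + 1) = x ^ Suc n"
    and "x powr (- real n) = 1 / x ^ n" and "x powr (- real n - 1) = 1 / x ^ Suc n"
proof -
  show n: "x powr real n = x ^ n"
    using assms by (rule powr_realpow)
  show Suc: "x powr (real n + 1) = x ^ Suc n"
    using powr_realpow[OF assms, of "Suc n"] by (simp add: add.commute)
  show "x powr (- real n) = 1 / x ^ n"
    by (simp add: powr_minus n divide_inverse)
  have "- real n - 1 = - (real n + 1)"
    by simp
  then show "x powr (- real n - 1) = 1 / x ^ Suc n"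
    by (simp only: powr_minus Suc divide_inverse mult_1)
qed

lemma G0_eq_euler_solution:
  assumes "0 < \<zeta>"
  obtains \<alpha> \<beta> where "\<And>\<eta>. 0 < \<eta> \<Longrightarrow> G0 l \<zeta> \<eta> = euler_solution (real l) \<alpha> \<beta> \<eta>"
    and "euler_solution (real l) \<alpha> \<beta> \<zeta> = 0" and "euler_solution' (real l) \<alpha> \<beta> \<zeta> = 1"
proof -
  define d where "d = 2 * real l + 1"
  have "0 < d"
    by (simp add: d_def)
  show ?thesis
  proof (rule that[of "1 / (d * \<zeta> ^ l)" "- (\<zeta> ^ Suc l) / d"])
    show "G0 l \<zeta> \<eta> = euler_solution (real l) (1 / (d * \<zeta> ^ l)) (- (\<zeta> ^ Suc l) / d) \<eta>"
      if "0 < \<eta>" for \<eta>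
      unfolding G0_def euler_solution_def d_def [symmetric] powr_real_of_nat_eqs[OF assms]
        powr_real_of_nat_eqs[OF that] Suc_eq_plus1 [symmetric]
      using assms that \<open>0 < d\<close> by (simp add: field_simps)
    show "euler_solution (real l) (1 / (d * \<zeta> ^ l)) (- (\<zeta> ^ Suc l) / d) \<zeta> = 0"
      and "euler_solution' (real l) (1 / (d * \<zeta> ^ l)) (- (\<zeta> ^ Suc l) / d) \<zeta> = 1"
      unfolding euler_solution_def euler_solution'_def powr_real_of_nat_eqs[OF assms]
      using assms \<open>0 < d\<close> by (simp_all add: field_simps) (simp add: d_def algebra_simps)
  qed
qed

lemma deriv_G0_eq_euler_solution:
  assumes "0 < \<zeta>"
  obtains \<alpha> \<beta> where "\<And>\<eta>. 0 < \<eta> \<Longrightarrow> deriv (\<lambda>z. G0 l z \<eta>) \<zeta> = - euler_solution (real l) \<alpha> \<beta> \<eta>"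
    and "0 \<le> \<alpha>" and "0 \<le> \<beta>"
    and "euler_solution (real l) \<alpha> \<beta> \<zeta> = 1" and "euler_solution' (real l) \<alpha> \<beta> \<zeta> = 0"
proof -
  define d where "d = 2 * real l + 1"
  have "0 < d"
    by (simp add: d_def)
  show ?thesis
  proof (rule that[of "real l / (d * \<zeta> ^ Suc l)" "(real l + 1) * \<zeta> ^ l / d"])
    fix \<eta> :: real assume "0 < \<eta>"
    have "((\<lambda>z. G0 l z \<eta>) has_real_derivative
        (\<eta> ^ (l + 1) * (- real l * \<zeta> powr (- real l - 1))
          - real (l + 1) * \<zeta> ^ (l + 1 - Suc 0) * \<eta> powr (- real l)) / d) (at \<zeta>)"
      unfolding G0_def d_def
      by (rule DERIV_cdivide[OF DERIV_diff[OF DERIV_cmult[OF has_real_derivative_powr[OF assms]]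
            DERIV_cmult_right[OF DERIV_pow]]])
    then have "((\<lambda>z. G0 l z \<eta>) has_real_derivative
        - euler_solution (real l) (real l / (d * \<zeta> ^ Suc l)) ((real l + 1) * \<zeta> ^ l / d) \<eta>) (at \<zeta>)"
      unfolding euler_solution_def powr_real_of_nat_eqs[OF assms] powr_real_of_nat_eqs[OF \<open>0 < \<eta>\<close>]
      by (rule DERIV_cong) (use assms \<open>0 < \<eta>\<close> \<open>0 < d\<close> in \<open>simp add: field_simps\<close>)
    then show "deriv (\<lambda>z. G0 l z \<eta>) \<zeta>
        = - euler_solution (real l) (real l / (d * \<zeta> ^ Suc l)) ((real l + 1) * \<zeta> ^ l / d) \<eta>"
      by (rule DERIV_imp_deriv)
  next
    show "euler_solution (real l) (real l / (d * \<zeta> ^ Suc l)) ((real l + 1) * \<zeta> ^ l / d) \<zeta> = 1"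
      and "euler_solution' (real l) (real l / (d * \<zeta> ^ Suc l)) ((real l + 1) * \<zeta> ^ l / d) \<zeta> = 0"
      unfolding euler_solution_def euler_solution'_def powr_real_of_nat_eqs[OF assms]
      using assms \<open>0 < d\<close> by (simp_all add: field_simps) (simp add: d_def algebra_simps)
  qed (use assms \<open>0 < d\<close> in simp_all)
qed

lemma G0_nonneg:
  assumes "0 < \<zeta>" and "\<zeta> \<le> \<eta>"
  shows "0 \<le> G0 l \<zeta> \<eta>"
proof -
  have "\<zeta> ^ (l + 1) * \<eta> powr (- real l) \<le> \<eta> ^ (l + 1) * \<zeta> powr (- real l)"
    using assms by (intro mult_mono power_mono powr_mono2') auto
  then show ?thesis
    by (simp add: G0_def)
qed

lemma G0_has_integral:
  assumes "0 < \<zeta>"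
  shows "((\<lambda>\<eta>. G0 l \<zeta> \<eta> * (sqrt_besselK (real l + 1/2) \<eta> / sqrt_besselK (real l + 1/2) \<zeta>))
    has_integral 1) {\<zeta>..}"
proof (rule G0_eq_euler_solution[OF assms, where l = l])
  fix \<alpha> \<beta>
  assume G0: "\<And>\<eta>. 0 < \<eta> \<Longrightarrow> G0 l \<zeta> \<eta> = euler_solution (real l) \<alpha> \<beta> \<eta>"
    and data: "euler_solution (real l) \<alpha> \<beta> \<zeta> = 0" "euler_solution' (real l) \<alpha> \<beta> \<zeta> = 1"
  have "0 \<le> euler_solution (real l) \<alpha> \<beta> \<eta>" if "\<zeta> \<le> \<eta>" for \<eta>
    using G0_nonneg[OF assms that, of l] G0[of \<eta>] assms that by simp
  from euler_solution_sqrt_besselK_ratio_has_integral[OF assms this]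
  have "((\<lambda>\<eta>. euler_solution (real l) \<alpha> \<beta> \<eta>
      * (sqrt_besselK (real l + 1/2) \<eta> / sqrt_besselK (real l + 1/2) \<zeta>)) has_integral 1) {\<zeta>..}"
    unfolding data by simp
  then show ?thesis
    by (rule has_integral_cong[THEN iffD1, rotated]) (use G0 assms in simp)
qed

lemma deriv_G0_has_integral:
  assumes "0 < \<zeta>"
  shows "((\<lambda>\<eta>. deriv (\<lambda>z. G0 l z \<eta>) \<zeta>
      * (sqrt_besselK (real l + 1/2) \<eta> / sqrt_besselK (real l + 1/2) \<zeta>)) has_integral sqrt_besselK' (real l + 1/2) \<zeta> / sqrt_besselK (real l + 1/2) \<zeta>) {\<zeta>..}"
proof (rule deriv_G0_eq_euler_solution[OF assms, where l = l])
  fix \<alpha> \<beta>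
  assume G0: "\<And>\<eta>. 0 < \<eta> \<Longrightarrow> deriv (\<lambda>z. G0 l z \<eta>) \<zeta> = - euler_solution (real l) \<alpha> \<beta> \<eta>"
    and "0 \<le> \<alpha>" "0 \<le> \<beta>"
    and data: "euler_solution (real l) \<alpha> \<beta> \<zeta> = 1" "euler_solution' (real l) \<alpha> \<beta> \<zeta> = 0"
  have "0 \<le> euler_solution (real l) \<alpha> \<beta> \<eta>" if "\<zeta> \<le> \<eta>" for \<eta>
    using \<open>0 \<le> \<alpha>\<close> \<open>0 \<le> \<beta>\<close> by (simp add: euler_solution_def)
  from has_integral_neg[OF euler_solution_sqrt_besselK_ratio_has_integral[OF assms this]]
  have "((\<lambda>\<eta>. - (euler_solution (real l) \<alpha> \<beta> \<eta>
      * (sqrt_besselK (real l + 1/2) \<eta> / sqrt_besselK (real l + 1/2) \<zeta>))) has_integral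
      sqrt_besselK' (real l + 1/2) \<zeta> / sqrt_besselK (real l + 1/2) \<zeta>) {\<zeta>..}"
    unfolding data by simp
  then show ?thesis
    by (rule has_integral_cong[THEN iffD1, rotated]) (use G0 assms in simp)
qed

theorem lemma46:
  fixes l :: nat and \<zeta> :: real
  assumes "\<zeta> > 0"
  shows "((\<lambda>\<eta>. exp (- \<eta> + \<zeta>) * G0 l \<zeta> \<eta> * (H0 l \<eta> / H0 l \<zeta>)) has_integral 1) {\<zeta>..} \<and>
         ((\<lambda>\<eta>. exp (- \<eta> + \<zeta>) * deriv (\<lambda>z. G0 l z \<eta>) \<zeta> * (H0 l \<eta> / H0 l \<zeta>))
           has_integral (-1 + deriv (H0 l) \<zeta> / H0 l \<zeta>)) {\<zeta>..}"
proof
  have ratio: "exp (- \<eta> + \<zeta>) * c * (H0 l \<eta> / H0 l \<zeta>)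
      = c * (sqrt_besselK (real l + 1/2) \<eta> / sqrt_besselK (real l + 1/2) \<zeta>)" if "\<eta> \<in> {\<zeta>..}" for \<eta> c
  proof -
    have "exp (- \<eta> + \<zeta>) * c * (H0 l \<eta> / H0 l \<zeta>) = c * (exp (- \<eta> + \<zeta>) * (H0 l \<eta> / H0 l \<zeta>))"
      by (simp only: mult_ac)
    with H0_ratio[OF assms, of \<eta> l] that show ?thesis
      by simp
  qed
  show "((\<lambda>\<eta>. exp (- \<eta> + \<zeta>) * G0 l \<zeta> \<eta> * (H0 l \<eta> / H0 l \<zeta>)) has_integral 1) {\<zeta>..}"
    using G0_has_integral[OF assms, of l]
    by (rule has_integral_cong[THEN iffD1, rotated]) (rule ratio [symmetric])
  show "((\<lambda>\<eta>. exp (- \<eta> + \<zeta>) * deriv (\<lambda>z. G0 l z \<eta>) \<zeta> * (H0 l \<eta> / H0 l \<zeta>))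
      has_integral (-1 + deriv (H0 l) \<zeta> / H0 l \<zeta>)) {\<zeta>..}"
    using deriv_G0_has_integral[OF assms, of l]
    unfolding deriv_H0_over_H0[OF assms] add.assoc [symmetric] add.left_inverse add_0
    by (rule has_integral_cong[THEN iffD1, rotated]) (rule ratio [symmetric])
qed

end
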